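(* Suppose $\{0,1\}^\ell$ admits a code decomposition with chain of parameters $(\ell,k_0,d_0)-(\ell,k_1,d_1)-\dots-(\ell,k_{m-1},d_{m-1})$, and set $k_m=0$. Then there exists a kernel $g$ of dimension $\ell$ whose partial distances satisfy $D_{min}^{(i)}\ge d_j$ for every $j\in\{0,\dots,m-1\}$ and every $i$ with $\ell-k_j\le i\le \ell-1-k_{j+1}$.
   Context: A code decomposition of $\{0,1\}^\ell$ with chain of parameters $(\ell,k_0,d_0)-(\ell,k_1,d_1)-\dots-(\ell,k_{m-1},d_{m-1})$ (integers $\ell=k_0>k_1>\dots>k_{m-1}\ge0$) is a family of nested partitions: level $0$ consists of the single set $\{0,1\}^\ell$, and for $j=1,\dots,m-1$ each set of level $j-1$ is partitioned into equally sized sets forming level $j$; every set at level $j$ has exactly $2^{k_j}$ elements and minimum Hamming distance at least $d_j$ between distinct elements. A kernel of dimension $\ell$ is a bijection $g:\{0,1\}^\ell\to\{0,1\}^\ell$; ${\bf a}\bullet{\bf b}$ denotes concatenation, $d_H$ Hamming distance; its partial distances are $D_{min}^{(i)}=\min\{d_H(g({\bf w}\bullet 0\bullet{\bf u}),g({\bf w}\bullet 1\bullet {\bf v})) : {\bf w}\in\{0,1\}^i,\ {\bf u},{\bf v}\in\{0,1\}^{\ell-i-1}\}$, $i=0,\dots,\ell-1$. *)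

theory Defs
  imports Main
begin

definition words :: "nat \<Rightarrow> bool list set" where
  "words l = {x. length x = l}"

definition hamming :: "bool list \<Rightarrow> bool list \<Rightarrow> nat" where
  "hamming x y = card {i. i < length x \<and> x ! i \<noteq> y ! i}"

definition min_dist_ge :: "bool list set \<Rightarrow> nat \<Rightarrow> bool" where
  "min_dist_ge S d = (\<forall>x\<in>S. \<forall>y\<in>S. x \<noteq> y \<longrightarrow> hamming x y \<ge> d)"

definition is_partition :: "bool list set set \<Rightarrow> bool list set \<Rightarrow> bool" where
  "is_partition Q X = ((\<forall>T\<in>Q. T \<noteq> {}) \<and> \<Union>Q = X \<and>
      (\<forall>T1\<in>Q. \<forall>T2\<in>Q. T1 \<noteq> T2 \<longrightarrow> T1 \<inter> T2 = {}))"

definition code_decomposition ::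
  "nat \<Rightarrow> nat \<Rightarrow> (nat \<Rightarrow> nat) \<Rightarrow> (nat \<Rightarrow> nat) \<Rightarrow> (nat \<Rightarrow> bool list set set) \<Rightarrow> bool" where
  "code_decomposition l m k d P =
     (m \<ge> 1 \<and> k 0 = l \<and> (\<forall>j. j + 1 < m \<longrightarrow> k (j + 1) < k j) \<and>
      P 0 = {words l} \<and>
      (\<forall>j. 1 \<le> j \<and> j < m \<longrightarrow>
         (\<forall>S\<in>P (j - 1). is_partition {T\<in>P j. T \<subseteq> S} S) \<and>
         (\<forall>T\<in>P j. \<exists>S\<in>P (j - 1). T \<subseteq> S)) \<and>
      (\<forall>j<m. \<forall>S\<in>P j. card S = 2 ^ k j \<and> min_dist_ge S (d j)))"

definition is_kernel :: "nat \<Rightarrow> (bool list \<Rightarrow> bool list) \<Rightarrow> bool" where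
  "is_kernel l g = bij_betw g (words l) (words l)"

definition Dmin :: "nat \<Rightarrow> (bool list \<Rightarrow> bool list) \<Rightarrow> nat \<Rightarrow> nat" where
  "Dmin l g i = Min {hamming (g (w @ [False] @ u)) (g (w @ [True] @ v)) | w u v.
       w \<in> words i \<and> u \<in> words (l - i - 1) \<and> v \<in> words (l - i - 1)}"

end

theory Submission
  imports Defs
begin

text \<open>Label the blocks of the decomposition recursively, from the deepest level upwards. A
  level-j block of size 2^(k j) splits into 2^(k j - k (j+1)) blocks of level j+1; indexing these
  by the first k j - k (j+1) bits and labelling each child recursively by the remaining bits gives
  a bijection from {0,1}^(k j) onto the block in which two labels sharing their first k j - k j'
  bits land in a common block of level j'. At level 0 this is a kernel g. If l - k j \<le> i, the
  inputs w\<bullet>0\<bullet>u and w\<bullet>1\<bullet>v share their first l - k j bits, so their images are distinct elements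
  of one level-j block and therefore at Hamming distance at least d j.\<close>

lemma finite_words: "finite (words n)"
  and card_words: "card (words n) = 2 ^ n"
proof -
  have words_eq: "words n = {xs. set xs \<subseteq> (UNIV :: bool set) \<and> length xs = n}"
    by (auto simp: words_def)
  show "finite (words n)"
    unfolding words_eq by (rule finite_lists_length_eq) simp
  show "card (words n) = 2 ^ n"
    unfolding words_eq
    using card_lists_length_eq[of "UNIV :: bool set" n] by (simp add: card_UNIV_bool)
qed

lemma take_drop_in_words:
  "x \<in> words (a + b) \<Longrightarrow> take a x \<in> words a \<and> drop a x \<in> words b"
  by (simp add: words_def)

lemma append_in_words: "x \<in> words a \<Longrightarrow> y \<in> words b \<Longrightarrow> x @ y \<in> words (a + b)"
  by (simp add: words_def)

lemma bij_betw_words_of_card: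
  assumes "card S = 2 ^ n"
  obtains h where "bij_betw h (words n) S"
proof -
  have "finite S" using assms card.infinite by fastforce
  then show ?thesis
    using that finite_same_card_bij[OF finite_words] assms card_words by metis
qed

lemma bij_betw_concat_labels:
  fixes C :: "'a set set"
  assumes phi: "bij_betw phi (words a) C" and disj: "pairwise disjnt C"
    and H: "\<And>T. T \<in> C \<Longrightarrow> bij_betw (H T) (words b) T"
  shows "bij_betw (\<lambda>x. H (phi (take a x)) (drop a x)) (words (a + b)) (\<Union>C)"
    (is "bij_betw ?h _ _")
proof -
  have block: "phi (take a x) \<in> C" if "x \<in> words (a + b)" for x
    using take_drop_in_words[OF that] bij_betwE[OF phi] by blast
  have in_block: "?h x \<in> phi (take a x)" if "x \<in> words (a + b)" for x
    using take_drop_in_words[OF that] bij_betwE[OF H[OF block[OF that]]] by blast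
  have "inj_on ?h (words (a + b))"
  proof (rule inj_onI)
    fix x y assume x: "x \<in> words (a + b)" and y: "y \<in> words (a + b)" and eq: "?h x = ?h y"
    have "phi (take a x) = phi (take a y)"
      using disj block[OF x] block[OF y] in_block[OF x] in_block[OF y] eq
      unfolding pairwise_def disjnt_def by (metis disjoint_iff)
    then have take_eq: "take a x = take a y"
      using take_drop_in_words[OF x] take_drop_in_words[OF y] bij_betw_imp_inj_on[OF phi]
      by (meson inj_onD)
    then have "drop a x = drop a y"
      using eq take_drop_in_words[OF x] take_drop_in_words[OF y]
        bij_betw_imp_inj_on[OF H[OF block[OF x]]] by (metis inj_onD)
    with take_eq show "x = y" by (metis append_take_drop_id)
  qed
  moreover have "\<Union>C \<subseteq> ?h ` words (a + b)"
  proof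
    fix s assume "s \<in> \<Union>C"
    then obtain T where T: "T \<in> C" "s \<in> T" by blast
    obtain u where u: "u \<in> words a" "phi u = T"
      using T(1) bij_betw_imp_surj_on[OF phi] by (metis imageE)
    obtain v where v: "v \<in> words b" "H T v = s"
      using T(2) bij_betw_imp_surj_on[OF H[OF T(1)]] by (metis imageE)
    have "?h (u @ v) = s" using u v by (simp add: words_def)
    then show "s \<in> ?h ` words (a + b)"
      using append_in_words[OF u(1) v(1)] by blast
  qed
  ultimately show ?thesis
    unfolding bij_betw_def using block in_block by blast
qed

lemma code_decomposition_card:
  "code_decomposition l m k d P \<Longrightarrow> j < m \<Longrightarrow> S \<in> P j \<Longrightarrow> card S = 2 ^ k j"
  unfolding code_decomposition_def by blast

lemma code_decomposition_min_dist:
  "code_decomposition l m k d P \<Longrightarrow> j < m \<Longrightarrow> S \<in> P j \<Longrightarrow> min_dist_ge S (d j)"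
  unfolding code_decomposition_def by blast

lemma code_decomposition_partition:
  assumes "code_decomposition l m k d P" "Suc j < m" "S \<in> P j"
  shows "is_partition {T \<in> P (Suc j). T \<subseteq> S} S"
proof -
  have "\<forall>S\<in>P (Suc j - 1). is_partition {T \<in> P (Suc j). T \<subseteq> S} S"
    using assms(1,2) unfolding code_decomposition_def by (metis One_nat_def Suc_le_mono le0)
  then show ?thesis using assms(3) by simp
qed

lemma code_decomposition_k_less:
  "code_decomposition l m k d P \<Longrightarrow> Suc j < m \<Longrightarrow> k (Suc j) < k j"
  unfolding code_decomposition_def by simp

lemma code_decomposition_k_antimono:
  assumes "code_decomposition l m k d P" "j \<le> j'" "j' < m"
  shows "k j' \<le> k j"
  using assms(2,3)
proof (induction j' rule: dec_induct)
  case (step n)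
  then show ?case using code_decomposition_k_less[OF assms(1), of n] by simp
qed simp

definition adapted_labelling ::
  "nat \<Rightarrow> (nat \<Rightarrow> nat) \<Rightarrow> (nat \<Rightarrow> bool list set set) \<Rightarrow> nat \<Rightarrow> bool list set \<Rightarrow>
    (bool list \<Rightarrow> bool list) \<Rightarrow> bool" where
  "adapted_labelling m k P j S h \<longleftrightarrow> bij_betw h (words (k j)) S \<and>
     (\<forall>j'. j \<le> j' \<and> j' < m \<longrightarrow> (\<forall>x\<in>words (k j). \<forall>y\<in>words (k j).
        take (k j - k j') x = take (k j - k j') y \<longrightarrow> (\<exists>T\<in>P j'. h x \<in> T \<and> h y \<in> T)))"

lemma adapted_labellingI:
  assumes bij: "bij_betw h (words (k j)) S" and S: "S \<in> P j"
    and deeper: "\<And>j' x y. j < j' \<Longrightarrow> j' < m \<Longrightarrow> x \<in> words (k j) \<Longrightarrow> y \<in> words (k j) \<Longrightarrow>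
      take (k j - k j') x = take (k j - k j') y \<Longrightarrow> \<exists>T\<in>P j'. h x \<in> T \<and> h y \<in> T"
  shows "adapted_labelling m k P j S h"
  unfolding adapted_labelling_def
proof (intro conjI bij allI impI ballI)
  fix j' x y assume j': "j \<le> j' \<and> j' < m" and x: "x \<in> words (k j)" and y: "y \<in> words (k j)"
    and "take (k j - k j') x = take (k j - k j') y"
  show "\<exists>T\<in>P j'. h x \<in> T \<and> h y \<in> T"
  proof (cases "j' = j")
    case True
    then show ?thesis using S bij_betwE[OF bij] x y by blast
  next
    case False
    then show ?thesis using deeper j' x y \<open>take _ x = _\<close> by simp
  qed
qed

lemma adapted_labelling_bij: "adapted_labelling m k P j S h \<Longrightarrow> bij_betw h (words (k j)) S"
  unfolding adapted_labelling_def by blast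

lemma adapted_labelling_common_block:
  assumes "adapted_labelling m k P j S h" "j \<le> j'" "j' < m" "x \<in> words (k j)" "y \<in> words (k j)"
    "take (k j - k j') x = take (k j - k j') y"
  shows "\<exists>T\<in>P j'. h x \<in> T \<and> h y \<in> T"
  using assms unfolding adapted_labelling_def by blast

lemma adapted_labelling_last_level:
  assumes cd: "code_decomposition l m k d P" and S: "S \<in> P (m - 1)" and m: "0 < m"
  shows "\<exists>h. adapted_labelling m k P (m - 1) S h"
proof -
  obtain h where "bij_betw h (words (k (m - 1))) S"
    using bij_betw_words_of_card code_decomposition_card[OF cd _ S] m by (metis diff_less zero_less_one)
  then have "adapted_labelling m k P (m - 1) S h"
    by (rule adapted_labellingI[where P=P and k=k and j="m - 1", OF _ S]) simp
  then show ?thesis by blast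
qed

lemma adapted_labelling_extend:
  assumes cd: "code_decomposition l m k d P" and j: "Suc j < m" and S: "S \<in> P j"
    and children: "\<forall>T\<in>P (Suc j). \<exists>h. adapted_labelling m k P (Suc j) T h"
  shows "\<exists>h. adapted_labelling m k P j S h"
proof -
  define C where "C = {T \<in> P (Suc j). T \<subseteq> S}"
  define a where "a = k j - k (Suc j)"
  have k_split: "a + k (Suc j) = k j"
    using code_decomposition_k_less[OF cd j] by (simp add: a_def)
  have part: "is_partition C S"
    unfolding C_def by (rule code_decomposition_partition[OF cd j S])
  then have disj: "pairwise disjnt C" and union: "\<Union>C = S"
    unfolding is_partition_def pairwise_def disjnt_def by blast+
  have card_S: "card S = 2 ^ k j"
    using code_decomposition_card[OF cd _ S] j by simp
  then have "finite S" by (metis card.infinite power_not_zero zero_neq_numeral)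
  then have "finite C" unfolding C_def by (simp add: finite_subset_image)
  have "2 ^ k (Suc j) * card C = card S"
    using card_partition[OF \<open>finite C\<close>] part \<open>finite S\<close> code_decomposition_card[OF cd j]
    unfolding is_partition_def C_def by auto
  then have "card C = 2 ^ a"
    using card_S k_split[symmetric] by (simp add: power_add)
  then obtain phi where phi: "bij_betw phi (words a) C"
    by (rule bij_betw_words_of_card)
  obtain H where H: "\<And>T. T \<in> C \<Longrightarrow> adapted_labelling m k P (Suc j) T (H T)"
    using children bchoice[of C "\<lambda>T h. adapted_labelling m k P (Suc j) T h"]
    unfolding C_def by auto
  define h where "h x = H (phi (take a x)) (drop a x)" for x
  have bij: "bij_betw h (words (k j)) S"
    using bij_betw_concat_labels[OF phi disj adapted_labelling_bij[OF H]]
    unfolding h_def k_split union .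
  have "adapted_labelling m k P j S h"
  proof (rule adapted_labellingI[where P=P and k=k and j=j, OF bij S])
    fix j' x y assume j': "j < j'" "j' < m" and x: "x \<in> words (k j)" and y: "y \<in> words (k j)"
      and prefix: "take (k j - k j') x = take (k j - k j') y"
    have "k j' \<le> k (Suc j)"
      using code_decomposition_k_antimono[OF cd _ j'(2)] j'(1) by simp
    then have len: "k j - k j' = a + (k (Suc j) - k j')"
      using k_split by simp
    have "take a x @ take (k (Suc j) - k j') (drop a x) = take a y @ take (k (Suc j) - k j') (drop a y)"
      using prefix unfolding len take_add .
    moreover have "length (take a x) = length (take a y)"
      using x y k_split by (simp add: words_def)
    ultimately have "take a x = take a y" and
      "take (k (Suc j) - k j') (drop a x) = take (k (Suc j) - k j') (drop a y)"
      by simp_all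
    moreover have "phi (take a x) \<in> C" "drop a x \<in> words (k (Suc j))" "drop a y \<in> words (k (Suc j))"
      using take_drop_in_words[of x a "k (Suc j)"] take_drop_in_words[of y a "k (Suc j)"]
        bij_betwE[OF phi] x y k_split by auto
    ultimately show "\<exists>T\<in>P j'. h x \<in> T \<and> h y \<in> T"
      using adapted_labelling_common_block[OF H _ j'(2)] j'(1) unfolding h_def by simp
  qed
  then show ?thesis by blast
qed

lemma adapted_labelling_exists:
  assumes cd: "code_decomposition l m k d P" and j: "j < m" and S: "S \<in> P j"
  shows "\<exists>h. adapted_labelling m k P j S h"
proof -
  have "j \<le> m - 1" using j by simp
  then have "\<forall>S\<in>P j. \<exists>h. adapted_labelling m k P j S h"
  proof (induction j rule: inc_induct)
    case base
    then show ?case using adapted_labelling_last_level[OF cd] j by simp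
  next
    case (step j)
    then show ?case using adapted_labelling_extend[OF cd] by simp
  qed
  then show ?thesis using S by blast
qed

lemma adapted_labelling_min_dist:
  assumes cd: "code_decomposition l m k d P" and h: "adapted_labelling m k P j S h"
    and j': "j \<le> j'" "j' < m" and x: "x \<in> words (k j)" and y: "y \<in> words (k j)"
    and "x \<noteq> y" and prefix: "take (k j - k j') x = take (k j - k j') y"
  shows "d j' \<le> hamming (h x) (h y)"
proof -
  obtain T where T: "T \<in> P j'" "h x \<in> T" "h y \<in> T"
    using adapted_labelling_common_block[OF h j' x y prefix] by blast
  have "h x \<noteq> h y"
    using adapted_labelling_bij[OF h] x y \<open>x \<noteq> y\<close> by (metis bij_betw_inv_into_left)
  then show ?thesis
    using code_decomposition_min_dist[OF cd j'(2) T(1)] T unfolding min_dist_ge_def by blast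
qed

lemma Dmin_lower_bound:
  assumes "\<And>w u v. w \<in> words i \<Longrightarrow> u \<in> words (l - i - 1) \<Longrightarrow> v \<in> words (l - i - 1) \<Longrightarrow>
    d \<le> hamming (g (w @ [False] @ u)) (g (w @ [True] @ v))"
  shows "d \<le> Dmin l g i"
proof -
  define D where "D = {hamming (g (w @ [False] @ u)) (g (w @ [True] @ v)) | w u v.
    w \<in> words i \<and> u \<in> words (l - i - 1) \<and> v \<in> words (l - i - 1)}"
  have "D \<subseteq> (\<lambda>(w, u, v). hamming (g (w @ [False] @ u)) (g (w @ [True] @ v))) `
      (words i \<times> words (l - i - 1) \<times> words (l - i - 1))"
  proof
    fix n assume "n \<in> D"
    then obtain w u v where "n = hamming (g (w @ [False] @ u)) (g (w @ [True] @ v))"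
      and "w \<in> words i" "u \<in> words (l - i - 1)" "v \<in> words (l - i - 1)"
      unfolding D_def by blast
    then show "n \<in> (\<lambda>(w, u, v). hamming (g (w @ [False] @ u)) (g (w @ [True] @ v))) `
      (words i \<times> words (l - i - 1) \<times> words (l - i - 1))"
      by (intro image_eqI[where x="(w, u, v)"]) auto
  qed
  then have "finite D"
    by (rule finite_subset) (simp add: finite_words)
  moreover have "D \<noteq> {}"
  proof -
    have "replicate i False \<in> words i" "replicate (l - i - 1) False \<in> words (l - i - 1)"
      by (simp_all add: words_def)
    then show ?thesis unfolding D_def by blast
  qed
  moreover have "\<forall>n\<in>D. d \<le> n" using assms unfolding D_def by blast
  ultimately have "d \<le> Min D" by simp
  then show ?thesis unfolding Dmin_def D_def .
qed

lemma adapted_labelling_Dmin: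
  assumes cd: "code_decomposition l m k d P" and g: "adapted_labelling m k P 0 (words l) g"
    and k0: "k 0 = l" and j: "j < m" and i: "l \<le> i + k j" "i < l"
  shows "d j \<le> Dmin l g i"
proof (rule Dmin_lower_bound)
  fix w u v assume w: "w \<in> words i" and uv: "u \<in> words (l - i - 1)" "v \<in> words (l - i - 1)"
  have "take (l - k j) (w @ [False] @ u) = take (l - k j) (w @ [True] @ v)"
    using w i by (simp add: words_def)
  moreover have "w @ [False] @ u \<in> words l" "w @ [True] @ v \<in> words l"
    using w uv i by (auto simp: words_def)
  ultimately show "d j \<le> hamming (g (w @ [False] @ u)) (g (w @ [True] @ v))"
    using adapted_labelling_min_dist[OF cd g[folded k0] _ j, of "w @ [False] @ u" "w @ [True] @ v"] k0
    by simp
qed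

theorem mainTheorem9:
  fixes l m :: nat and k d :: "nat \<Rightarrow> nat" and P :: "nat \<Rightarrow> bool list set set"
  assumes "code_decomposition l m k d P"
  shows "\<exists>g. is_kernel l g \<and>
    (\<forall>j<m. \<forall>i. l \<le> i + k j \<and> i + 1 + (if j + 1 = m then 0 else k (j + 1)) \<le> l
        \<longrightarrow> Dmin l g i \<ge> d j)"
proof -
  have m: "0 < m" and k0: "k 0 = l" and P0: "P 0 = {words l}"
    using assms unfolding code_decomposition_def by auto
  obtain g where g: "adapted_labelling m k P 0 (words l) g"
    using adapted_labelling_exists[OF assms m] P0 k0 by auto
  show ?thesis
  proof (intro exI[of _ g] conjI allI impI)
    show "is_kernel l g"
      using adapted_labelling_bij[OF g] k0 by (simp add: is_kernel_def)
  next
    fix j i assume "j < m" "l \<le> i + k j \<and> i + 1 + (if j + 1 = m then 0 else k (j + 1)) \<le> l"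
    then show "d j \<le> Dmin l g i"
      using adapted_labelling_Dmin[OF assms g k0] by simp
  qed
qed

end
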